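(* Let $Q_1=(Q_{1,1},\ldots,Q_{1,d})$ and $Q_2=(Q_{2,1},\ldots,Q_{2,d})$ be the expected relative abundance vectors of two populations. (i) If $I_{0,1},I_{0,2}\subset[d]$ are two reference sets (with constants $b_1,b_2>0$ respectively) satisfying $|I_{0,1}|>d/2$ and $|I_{0,2}|>d/2$, then the reference-based null and alternative hypotheses defined using $I_{0,1}$ coincide with those defined using $I_{0,2}$; that is, the hypotheses are well defined when the reference set is assumed to have more than $d/2$ elements. (ii) In contrast, there exist instances $(Q_1,Q_2)$ with two reference sets $I_{0,1}$, $I_{0,2}$ satisfying $|I_{0,1}|,|I_{0,2}|\le d/2$ such that the null hypotheses defined by $I_{0,1}$ and by $I_{0,2}$ contradict each other (a component is null under one reference set and non-null under the other).
   Context: There are $d$ components, $[d]=\{1,\ldots,d\}$. For two populations $\pi_1,\pi_2$ of absolute abundance vectors $A=(A_1,\ldots,A_d)\in[0,\infty)^d$, the relative abundance is $P_i=A_i/\sum_{i'=1}^dA_{i'}$ and $Q_{k,i}=\mathbb{E}_{\pi_k}(P_i)$ for $k=1,2$. A subset $I_0\subset[d]$ is called a reference set if there is a constant $b>0$ with $Q_{1,i}=bQ_{2,i}$ for all $i\in I_0$. Given a reference set $I_0$, the reference-based hypotheses for component $i$ are $H_{i,0}: Q_{1,i}/\sum_{i'\in I_0}Q_{1,i'}=Q_{2,i}/\sum_{i'\in I_0}Q_{2,i'}$ versus $H_{i,1}: Q_{1,i}/\sum_{i'\in I_0}Q_{1,i'}\ne Q_{2,i}/\sum_{i'\in I_0}Q_{2,i'}$.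 *)

theory Defs
  imports Complex_Main
begin

text \<open>An expected relative abundance vector
  is modelled as a function Q :: nat => real whose values on {1..d} are positive
  and sum to 1 (values outside {1..d} are irrelevant).\<close>

definition rel_abund_vec :: "nat \<Rightarrow> (nat \<Rightarrow> real) \<Rightarrow> bool" where
  "rel_abund_vec d Q \<longleftrightarrow> (\<forall>i\<in>{1..d}. 0 < Q i) \<and> (\<Sum>i=1..d. Q i) = 1"

definition reference_set_with ::
  "nat \<Rightarrow> (nat \<Rightarrow> real) \<Rightarrow> (nat \<Rightarrow> real) \<Rightarrow> nat set \<Rightarrow> real \<Rightarrow> bool" where
  "reference_set_with d Q1 Q2 I0 b \<longleftrightarrow>
     I0 \<subseteq> {1..d} \<and> I0 \<noteq> {} \<and> 0 < b \<and> (\<forall>i\<in>I0. Q1 i = b * Q2 i)"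

definition null_hyp :: "(nat \<Rightarrow> real) \<Rightarrow> (nat \<Rightarrow> real) \<Rightarrow> nat set \<Rightarrow> nat \<Rightarrow> bool" where
  "null_hyp Q1 Q2 I0 i \<longleftrightarrow>
     Q1 i / (\<Sum>i'\<in>I0. Q1 i') = Q2 i / (\<Sum>i'\<in>I0. Q2 i')"

definition alt_hyp :: "(nat \<Rightarrow> real) \<Rightarrow> (nat \<Rightarrow> real) \<Rightarrow> nat set \<Rightarrow> nat \<Rightarrow> bool" where
  "alt_hyp Q1 Q2 I0 i \<longleftrightarrow>
     Q1 i / (\<Sum>i'\<in>I0. Q1 i') \<noteq> Q2 i / (\<Sum>i'\<in>I0. Q2 i')"

end

theory Submission
  imports Defs
begin

text \<open>Normalising by a reference set I with constant b divides both sides of the null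
  hypothesis by sums that differ exactly by the factor b, so H_{i,0} holds iff
  Q1 i = b * Q2 i: the hypotheses depend on the reference set only through b.
  Two reference sets with more than d/2 elements each share a component, which
  forces their constants, and hence the hypotheses, to agree. Without that size
  condition, for d = 2 with Q1 = (1/3, 2/3) and Q2 = (1/2, 1/2) both singletons
  are reference sets, with constants 2/3 and 4/3, and they disagree on component 1.\<close>

lemma alt_hyp_iff_not_null_hyp: "alt_hyp Q1 Q2 I i \<longleftrightarrow> \<not> null_hyp Q1 Q2 I i"
  by (simp add: alt_hyp_def null_hyp_def)

lemma null_hyp_iff_reference_scale:
  assumes ref: "reference_set_with d Q1 Q2 I b" and Q2: "rel_abund_vec d Q2"
  shows "null_hyp Q1 Q2 I i \<longleftrightarrow> Q1 i = b * Q2 i"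
proof -
  have sub: "I \<subseteq> {1..d}" and ne: "I \<noteq> {}" and b: "0 < b"
    and scale: "\<forall>j\<in>I. Q1 j = b * Q2 j"
    using ref unfolding reference_set_with_def by auto
  have "(\<Sum>j\<in>I. Q1 j) = b * (\<Sum>j\<in>I. Q2 j)"
    using scale by (simp add: sum_distrib_left)
  moreover have "0 < (\<Sum>j\<in>I. Q2 j)"
    using Q2 sub ne by (intro sum_pos) (auto simp: rel_abund_vec_def finite_subset)
  ultimately show ?thesis
    using b by (auto simp: null_hyp_def field_simps)
qed

lemma reference_constants_eq:
  assumes "reference_set_with d Q1 Q2 I b" "reference_set_with d Q1 Q2 I' b'"
    and "rel_abund_vec d Q2" and "I \<inter> I' \<noteq> {}"
  shows "b = b'"
proof -
  obtain j where "j \<in> I" "j \<in> I'"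
    using assms(4) by blast
  then have "b * Q2 j = b' * Q2 j" and "0 < Q2 j"
    using assms(1-3) by (auto simp: reference_set_with_def rel_abund_vec_def)
  then show ?thesis
    by simp
qed

lemma card_add_gt_imp_Int_nonempty:
  assumes "finite S" "A \<subseteq> S" "B \<subseteq> S" "card S < card A + card B"
  shows "A \<inter> B \<noteq> {}"
proof
  assume "A \<inter> B = {}"
  then have "card A + card B = card (A \<union> B)"
    using assms(1-3) by (simp add: card_Un_disjoint finite_subset)
  also have "\<dots> \<le> card S"
    using assms(1-3) by (simp add: card_mono)
  finally show False
    using assms(4) by simp
qed

lemma null_hyp_majority_reference_indep:
  assumes "rel_abund_vec d Q2"
    and ref: "reference_set_with d Q1 Q2 I b" "reference_set_with d Q1 Q2 I' b'"
    and card: "real (card I) > real d / 2" "real (card I') > real d / 2"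
  shows "null_hyp Q1 Q2 I i \<longleftrightarrow> null_hyp Q1 Q2 I' i"
proof -
  have "I \<inter> I' \<noteq> {}"
    using ref card
    by (intro card_add_gt_imp_Int_nonempty[of "{1..d}"]) (auto simp: reference_set_with_def)
  then have "b = b'"
    using assms(1) ref by (intro reference_constants_eq)
  then show ?thesis
    using assms(1) ref by (simp add: null_hyp_iff_reference_scale)
qed

lemma null_hyp_small_references_conflict:
  defines "Q1 \<equiv> \<lambda>i::nat. if i = 1 then 1/3 else 2/3 :: real"
    and "Q2 \<equiv> \<lambda>i::nat. 1/2 :: real"
  shows "rel_abund_vec 2 Q1" "rel_abund_vec 2 Q2"
    and "reference_set_with 2 Q1 Q2 {1} (2/3)" "reference_set_with 2 Q1 Q2 {2} (4/3)"
    and "null_hyp Q1 Q2 {1} 1" "alt_hyp Q1 Q2 {2} 1"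
  unfolding Q1_def Q2_def rel_abund_vec_def reference_set_with_def null_hyp_def alt_hyp_def
  by (simp_all add: numeral_2_eq_2)

theorem proposition1:
  shows "(\<forall>(d::nat) Q1 Q2 I01 I02 b1 b2.
            rel_abund_vec d Q1 \<and> rel_abund_vec d Q2 \<and>
            reference_set_with d Q1 Q2 I01 b1 \<and> reference_set_with d Q1 Q2 I02 b2 \<and>
            real (card I01) > real d / 2 \<and> real (card I02) > real d / 2 \<longrightarrow>
            (\<forall>i\<in>{1..d}. (null_hyp Q1 Q2 I01 i \<longleftrightarrow> null_hyp Q1 Q2 I02 i) \<and>
                         (alt_hyp Q1 Q2 I01 i \<longleftrightarrow> alt_hyp Q1 Q2 I02 i)))
       \<and>
         (\<exists>(d::nat) Q1 Q2 I01 I02 b1 b2 i.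
            rel_abund_vec d Q1 \<and> rel_abund_vec d Q2 \<and>
            reference_set_with d Q1 Q2 I01 b1 \<and> reference_set_with d Q1 Q2 I02 b2 \<and>
            real (card I01) \<le> real d / 2 \<and> real (card I02) \<le> real d / 2 \<and>
            i \<in> {1..d} \<and> null_hyp Q1 Q2 I01 i \<and> alt_hyp Q1 Q2 I02 i)"
proof (intro conjI allI impI)
  fix d :: nat and Q1 Q2 I01 I02 b1 b2
  assume "rel_abund_vec d Q1 \<and> rel_abund_vec d Q2 \<and>
    reference_set_with d Q1 Q2 I01 b1 \<and> reference_set_with d Q1 Q2 I02 b2 \<and>
    real (card I01) > real d / 2 \<and> real (card I02) > real d / 2"
  then have "null_hyp Q1 Q2 I01 i \<longleftrightarrow> null_hyp Q1 Q2 I02 i" for i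
    using null_hyp_majority_reference_indep by blast
  then show "\<forall>i\<in>{1..d}. (null_hyp Q1 Q2 I01 i \<longleftrightarrow> null_hyp Q1 Q2 I02 i) \<and>
      (alt_hyp Q1 Q2 I01 i \<longleftrightarrow> alt_hyp Q1 Q2 I02 i)"
    by (simp add: alt_hyp_iff_not_null_hyp)
next
  have "real (card {1::nat}) \<le> real 2 / 2" "real (card {2::nat}) \<le> real 2 / 2" "(1::nat) \<in> {1..2}"
    by simp_all
  with null_hyp_small_references_conflict show "\<exists>(d::nat) Q1 Q2 I01 I02 b1 b2 i.
      rel_abund_vec d Q1 \<and> rel_abund_vec d Q2 \<and>
      reference_set_with d Q1 Q2 I01 b1 \<and> reference_set_with d Q1 Q2 I02 b2 \<and>
      real (card I01) \<le> real d / 2 \<and> real (card I02) \<le> real d / 2 \<and>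
      i \<in> {1..d} \<and> null_hyp Q1 Q2 I01 i \<and> alt_hyp Q1 Q2 I02 i"
    by blast
qed

end
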